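(* Let $P$ denote the law of the (discrete-time, single-type) CMJ random tree and $\hat{P}$ the law of the size-biased CMJ tree (with immortal lineage). For every fixed level $n$ and every tree $t$, $$\hat{P}([T]_n = t) = E(N_n; [T]_n = t),$$ where the Nerman martingale $$N_n = \sum_{y \in I_n} e^{-\alpha \sigma_y}$$ is the reproductive value of the coming generation at time $n$.
   Context: Setting: a single-type Crump–Mode–Jagers (general branching) process in discrete time started from one ancestor born at time $0$. The individual reproduction law is given by probabilities $p_0$ and $p_k(n_1,\dots,n_k)$, $1\le n_1\le\dots\le n_k<\infty$, $k\ge1$, where $p_k(n_1,\dots,n_k)$ is the probability of having exactly $k$ children born at ages $n_1,\dots,n_k$ of the mother; individuals reproduce independently with this common law. Individuals are labelled by finite sequences $x=(x_1,\dots,x_j)$ of positive integers (the $i$-th daughter of $x$ is $xi$), each with an i.i.d. life $\omega_x$; the bearing ages of $x$ are $\tau_i(\omega_x)$ ($=\infty$ for $i$ beyond the offspring number), and the birth time of $x=(x_1,\dots,x_j)$ is $\sigma_x = \tau_{x_1}(\omega_0)+\tau_{x_2}(\omega_{x_1})+\dots+\tau_{x_j}(\omega_{x_1\dots x_{j-1}})$. Let $m_n$ be the mean number of children born to an individual at age $n$, and let $\alpha$ be the Malthusian parameter, the solution of $\sum_{n\ge1} e^{-\alpha n} m_n = 1$. The stopped tree at level $n$ is $[T]_n = \{\omega_x, x : \sigma_x \le n\}$ (all individuals born by time $n$ together with their complete lives). The coming generation $I_n$ at time $n$ is the set of vertices of the stopped tree $[T]_n$ located above level $n$, i.e. individuals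 $y$ with $\sigma_y > n$ whose mother was born by time $n$. The size-biased measure $\hat{P}$: there is a distinguished immortal lineage starting from the ancestor. An immortal individual has $k$ children at ages $n_1,\dots,n_k$ and designates its $j$-th child as the next immortal with probability $\hat{p}_{k,j}(n_1,\dots,n_k) = 1_{\{1\le j\le k\}} e^{-\alpha n_j} p_k(n_1,\dots,n_k)$; all other (mortal) individuals reproduce independently according to the original law $p_k(n_1,\dots,n_k)$. $\hat{P}([T]_n=t)$ is the marginal law of the (unlabelled-lineage) stopped tree under this measure. *)

theory Defs
  imports "HOL-Probability.Probability"
begin

text \<open>A life is the (finite, sorted) list of bearing ages [n_1,...,n_k] of its children.
  Individuals are labelled by lists of positive integers; the i-th daughter of x is x @ [i].\<close>

type_synonym life = "nat list"
type_synonym label = "nat list"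

definition tau :: "life \<Rightarrow> nat \<Rightarrow> enat" where
  "tau l i = (if 1 \<le> i \<and> i \<le> length l then enat (l ! (i - 1)) else \<infinity>)"

fun birth_from :: "(label \<Rightarrow> life) \<Rightarrow> label \<Rightarrow> label \<Rightarrow> enat" where
  "birth_from \<omega> pre [] = 0"
| "birth_from \<omega> pre (i # rest) = tau (\<omega> pre) i + birth_from \<omega> (pre @ [i]) rest"

definition sigma :: "(label \<Rightarrow> life) \<Rightarrow> label \<Rightarrow> enat" where
  "sigma \<omega> x = birth_from \<omega> [] x"

definition stopped :: "(label \<Rightarrow> life) \<Rightarrow> nat \<Rightarrow> (label \<Rightarrow> life option)" where
  "stopped \<omega> n = (\<lambda>x. if sigma \<omega> x \<le> enat n then Some (\<omega> x) else None)"

definition coming_gen :: "(label \<Rightarrow> life) \<Rightarrow> nat \<Rightarrow> label set" where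
  "coming_gen \<omega> n = {y. y \<noteq> [] \<and> sigma \<omega> y \<noteq> \<infinity> \<and> enat n < sigma \<omega> y
                        \<and> sigma \<omega> (butlast y) \<le> enat n}"

definition nerman :: "real \<Rightarrow> (label \<Rightarrow> life) \<Rightarrow> nat \<Rightarrow> real" where
  "nerman \<alpha> \<omega> n = (\<Sum>y\<in>coming_gen \<omega> n. exp (- \<alpha> * real (the_enat (sigma \<omega> y))))"

definition mean_births :: "life pmf \<Rightarrow> nat \<Rightarrow> ennreal" where
  "mean_births p n = (\<integral>\<^sup>+ l. ennreal (real (count_list l n)) \<partial>measure_pmf p)"

definition cmj_law :: "life pmf \<Rightarrow> (label \<Rightarrow> life) measure" where
  "cmj_law p = PiM UNIV (\<lambda>_::label. measure_pmf p)"

text \<open>Joint law of (life, designated child j) of an immortal individual: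
  hat p_{k,j}(n_1..n_k) = 1{1<=j<=k} e^{-alpha n_j} p_k(n_1..n_k).\<close>
definition hat_law :: "life pmf \<Rightarrow> real \<Rightarrow> (life \<times> nat) measure" where
  "hat_law p \<alpha> = density (count_space UNIV)
     (\<lambda>(l, j). ennreal (if 1 \<le> j \<and> j \<le> length l
                         then exp (- \<alpha> * real (l ! (j - 1))) * pmf p l else 0))"

text \<open>Label of the immortal individual at depth k, given the spine data S
  (S k = (life of the immortal at depth k, index of its immortal child)).\<close>
definition spine :: "(nat \<Rightarrow> life \<times> nat) \<Rightarrow> nat \<Rightarrow> label" where
  "spine S k = map (\<lambda>i. snd (S i)) [0..<k]"

definition sb_lives :: "(nat \<Rightarrow> life \<times> nat) \<Rightarrow> (label \<Rightarrow> life) \<Rightarrow> (label \<Rightarrow> life)" where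
  "sb_lives S \<omega>' = (\<lambda>x. if x = spine S (length x) then fst (S (length x)) else \<omega>' x)"

definition sb_law :: "life pmf \<Rightarrow> real \<Rightarrow> ((nat \<Rightarrow> life \<times> nat) \<times> (label \<Rightarrow> life)) measure" where
  "sb_law p \<alpha> = PiM UNIV (\<lambda>_::nat. hat_law p \<alpha>) \<Otimes>\<^sub>M cmj_law p"

end

theory Submission
  imports Defs
begin

text \<open>
  If t is a stopped tree at all, say t = [\<omega>0]_n, the event [T]_n = t says exactly that the lives
  of the individuals born by time n are those of \<omega>0. When these lives have positive probability
  the born set is finite (bearing ages are at least 1), the event has P-probability
  Q = \<Prod> p(\<omega>0 x) over the born x, and N_n is constant on it, so the right-hand side is N_n(\<omega>0) Q.
  Under hat P the immortal spine leaves the born set through exactly one label y whose mother is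
  born; splitting the event according to y, the size-biased weights along the ancestors of y
  multiply to e^{-\<alpha> \<sigma>_y} times their original probabilities, so the piece for y has probability
  e^{-\<alpha> \<sigma>_y} Q, which vanishes unless y is in the coming generation. Summing over y gives
  N_n(\<omega>0) Q. The Malthusian equation is what makes the spine law a probability measure.
\<close>

lemma birth_from_snoc:
  "birth_from \<omega> pre (xs @ [i]) = birth_from \<omega> pre xs + tau (\<omega> (pre @ xs)) i"
  by (induction xs arbitrary: pre) (simp_all add: add.assoc)

lemma sigma_Nil [simp]: "sigma \<omega> [] = 0"
  by (simp add: sigma_def)

lemma sigma_snoc: "sigma \<omega> (x @ [i]) = sigma \<omega> x + tau (\<omega> x) i"
  by (simp add: sigma_def birth_from_snoc)

lemma sigma_append_mono: "sigma \<omega> x \<le> sigma \<omega> (x @ ys)"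
proof (induction ys rule: rev_induct)
  case (snoc y ys)
  then show ?case
    using sigma_snoc[of \<omega> "x @ ys" y] by (metis append_assoc le_iff_add order_trans)
qed simp

lemma sigma_take_le: "sigma \<omega> (take k x) \<le> sigma \<omega> x"
  using sigma_append_mono[of \<omega> "take k x" "drop k x"] by simp

lemma sigma_snoc_finite_imp:
  assumes "sigma \<omega> (z @ [i]) \<noteq> \<infinity>"
  shows "1 \<le> i \<and> i \<le> length (\<omega> z)"
  using assms by (cases "tau (\<omega> z) i") (auto simp: sigma_snoc tau_def split: if_splits)

definition born :: "(label \<Rightarrow> life) \<Rightarrow> nat \<Rightarrow> label set" where
  "born \<omega> n = {x. sigma \<omega> x \<le> enat n}"

definition prefix_closed :: "label set \<Rightarrow> bool" where
  "prefix_closed D \<longleftrightarrow> (\<forall>x\<in>D. \<forall>k. take k x \<in> D)"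

lemma Nil_in_born: "[] \<in> born \<omega> n"
  by (simp add: born_def zero_enat_def)

lemma prefix_closed_born: "prefix_closed (born \<omega> n)"
  unfolding prefix_closed_def born_def using sigma_take_le order_trans by blast

lemma snoc_in_born_imp: "z @ [i] \<in> born \<omega> n \<Longrightarrow> z \<in> born \<omega> n"
  using prefix_closed_born[of \<omega> n] unfolding prefix_closed_def by (metis butlast_snoc butlast_conv_take)

context
  fixes \<omega> \<omega>0 :: "label \<Rightarrow> life" and n :: nat
  assumes agree: "\<forall>x\<in>born \<omega>0 n. \<omega> x = \<omega>0 x"
begin

lemma sigma_eq_on_born: "x \<in> born \<omega>0 n \<Longrightarrow> sigma \<omega> x = sigma \<omega>0 x"
proof (induction x rule: rev_induct)
  case (snoc i z)
  from snoc.prems have "z \<in> born \<omega>0 n" by (rule snoc_in_born_imp)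
  with snoc agree show ?case by (simp add: sigma_snoc)
qed simp

lemma sigma_eq_on_children:
  assumes "y \<noteq> []" "butlast y \<in> born \<omega>0 n"
  shows "sigma \<omega> y = sigma \<omega>0 y"
proof -
  have "y = butlast y @ [last y]" using assms(1) by simp
  then show ?thesis
    using assms(2) agree sigma_eq_on_born by (metis sigma_snoc)
qed

lemma born_eq: "born \<omega> n = born \<omega>0 n"
proof (intro set_eqI iffI)
  fix x assume "x \<in> born \<omega> n"
  then show "x \<in> born \<omega>0 n"
  proof (induction x rule: rev_induct)
    case (snoc i z)
    then have "z \<in> born \<omega>0 n" using snoc_in_born_imp by blast
    with snoc.prems show ?case
      using sigma_eq_on_children[of "z @ [i]"] by (simp add: born_def)
  qed (simp add: Nil_in_born)
qed (use sigma_eq_on_born in \<open>simp add: born_def\<close>)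

end

lemma stopped_eq_iff:
  "stopped \<omega> n = stopped \<omega>0 n \<longleftrightarrow> (\<forall>x\<in>born \<omega>0 n. \<omega> x = \<omega>0 x)"
proof
  assume "stopped \<omega> n = stopped \<omega>0 n"
  then show "\<forall>x\<in>born \<omega>0 n. \<omega> x = \<omega>0 x"
    by (auto simp: stopped_def born_def fun_eq_iff split: if_splits)
next
  assume agree: "\<forall>x\<in>born \<omega>0 n. \<omega> x = \<omega>0 x"
  have "x \<in> born \<omega> n \<longleftrightarrow> x \<in> born \<omega>0 n" for x
    using born_eq[OF agree] by simp
  with agree show "stopped \<omega> n = stopped \<omega>0 n"
    by (auto simp: stopped_def born_def fun_eq_iff)
qed

definition exit_labels :: "label set \<Rightarrow> label set" where
  "exit_labels D = {y. y \<noteq> [] \<and> butlast y \<in> D \<and> y \<notin> D}"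

lemma coming_gen_eq: "coming_gen \<omega> n = {y \<in> exit_labels (born \<omega> n). sigma \<omega> y \<noteq> \<infinity>}"
  by (auto simp: coming_gen_def exit_labels_def born_def)

lemma nerman_eq_if_agree:
  assumes agree: "\<forall>x\<in>born \<omega>0 n. \<omega> x = \<omega>0 x"
  shows "nerman \<alpha> \<omega> n = nerman \<alpha> \<omega>0 n"
proof -
  have sigma_eq: "sigma \<omega> y = sigma \<omega>0 y" if "y \<in> exit_labels (born \<omega>0 n)" for y
    using sigma_eq_on_children[OF agree] that by (simp add: exit_labels_def)
  then have "coming_gen \<omega> n = coming_gen \<omega>0 n"
    by (auto simp: coming_gen_eq born_eq[OF agree])
  then show ?thesis
    unfolding nerman_def by (intro sum.cong) (auto simp: coming_gen_eq sigma_eq)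
qed

primrec generation :: "(label \<Rightarrow> life) \<Rightarrow> nat \<Rightarrow> label set" where
  "generation \<omega> 0 = {[]}"
| "generation \<omega> (Suc k) = (\<Union>z\<in>generation \<omega> k. (\<lambda>i. z @ [i]) ` {1..length (\<omega> z)})"

lemma finite_generation: "finite (generation \<omega> k)"
  by (induction k) auto

lemma sigma_finite_imp_generation: "sigma \<omega> x \<noteq> \<infinity> \<Longrightarrow> x \<in> generation \<omega> (length x)"
proof (induction x rule: rev_induct)
  case (snoc i z)
  then have "sigma \<omega> z \<noteq> \<infinity>"
    using sigma_append_mono[of \<omega> z "[i]"] by (cases "sigma \<omega> (z @ [i])") (auto dest: enat_ile)
  with snoc have "z \<in> generation \<omega> (length z)" by simp
  with sigma_snoc_finite_imp[OF snoc.prems] show ?case by (auto intro!: bexI[of _ z])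
qed simp

lemma length_le_sigma:
  assumes pos: "\<forall>x\<in>born \<omega> n. \<forall>a\<in>set (\<omega> x). 1 \<le> a"
  shows "x \<in> born \<omega> n \<Longrightarrow> enat (length x) \<le> sigma \<omega> x"
proof (induction x rule: rev_induct)
  case (snoc i z)
  from snoc.prems have z: "z \<in> born \<omega> n" by (rule snoc_in_born_imp)
  have "sigma \<omega> (z @ [i]) \<noteq> \<infinity>" using snoc.prems by (auto simp: born_def dest: enat_ile)
  then have i: "1 \<le> i" "i \<le> length (\<omega> z)" using sigma_snoc_finite_imp by blast+
  then have "1 \<le> \<omega> z ! (i - 1)" using pos z by simp
  then have "enat 1 \<le> tau (\<omega> z) i" using i by (simp add: tau_def)
  with snoc.IH[OF z] have "enat (length z) + enat 1 \<le> sigma \<omega> z + tau (\<omega> z) i"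
    by (rule add_mono)
  then show ?case by (simp add: sigma_snoc)
qed (simp add: zero_enat_def)

lemma finite_born:
  assumes pos: "\<forall>x\<in>born \<omega> n. \<forall>a\<in>set (\<omega> x). 1 \<le> a"
  shows "finite (born \<omega> n)"
proof (rule finite_subset)
  show "born \<omega> n \<subseteq> (\<Union>k\<le>n. generation \<omega> k)"
  proof
    fix x assume x: "x \<in> born \<omega> n"
    then have "enat (length x) \<le> enat n"
      using length_le_sigma[OF pos x] unfolding born_def by (blast intro: order_trans)
    then have "length x \<le> n" by simp
    moreover have "x \<in> generation \<omega> (length x)"
      using x by (intro sigma_finite_imp_generation) (auto simp: born_def dest: enat_ile)
    ultimately show "x \<in> (\<Union>k\<le>n. generation \<omega> k)" by auto
  qed
qed (simp add: finite_generation)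

lemma finite_coming_gen:
  assumes "finite (born \<omega> n)"
  shows "finite (coming_gen \<omega> n)"
proof (rule finite_subset)
  show "coming_gen \<omega> n \<subseteq> (\<Union>z\<in>born \<omega> n. (\<lambda>i. z @ [i]) ` {1..length (\<omega> z)})"
  proof
    fix y assume "y \<in> coming_gen \<omega> n"
    then have y: "y = butlast y @ [last y]" "butlast y \<in> born \<omega> n" "sigma \<omega> y \<noteq> \<infinity>"
      by (auto simp: coming_gen_eq exit_labels_def)
    then have "last y \<in> {1..length (\<omega> (butlast y))}"
      using sigma_snoc_finite_imp[of \<omega> "butlast y" "last y"] by simp
    with y show "y \<in> (\<Union>z\<in>born \<omega> n. (\<lambda>i. z @ [i]) ` {1..length (\<omega> z)})"
      by blast
  qed
qed (use assms in auto)

lemma length_spine [simp]: "length (spine S k) = k"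
  by (simp add: spine_def)

lemma take_spine: "k \<le> m \<Longrightarrow> take k (spine S m) = spine S k"
  by (simp add: spine_def take_map min_def)

lemma nth_spine: "i < k \<Longrightarrow> spine S k ! i = snd (S i)"
  by (simp add: spine_def)

lemma spine_eq_iff: "spine S (length y) = y \<longleftrightarrow> (\<forall>k<length y. snd (S k) = y ! k)"
proof
  show "spine S (length y) = y \<Longrightarrow> \<forall>k<length y. snd (S k) = y ! k"
    by (metis nth_spine)
qed (intro nth_equalityI, simp_all add: nth_spine)

definition proper_prefixes :: "label \<Rightarrow> label set" where
  "proper_prefixes y = (\<lambda>k. take k y) ` {..<length y}"

lemma finite_proper_prefixes: "finite (proper_prefixes y)"
  by (simp add: proper_prefixes_def)

lemma proper_prefixes_snoc: "proper_prefixes (y @ [i]) = insert y (proper_prefixes y)"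
proof -
  have "(\<lambda>k. take k (y @ [i])) ` {..<length y} = (\<lambda>k. take k y) ` {..<length y}"
    by (rule image_cong) simp_all
  then show ?thesis unfolding proper_prefixes_def by (simp add: lessThan_Suc)
qed

lemma length_proper_prefixes: "x \<in> proper_prefixes y \<Longrightarrow> length x < length y"
  unfolding proper_prefixes_def by auto

lemma not_in_proper_prefixes: "y \<notin> proper_prefixes y"
  using length_proper_prefixes by blast

lemma proper_prefixes_subset_exit:
  assumes "prefix_closed D" "y \<in> exit_labels D"
  shows "proper_prefixes y \<subseteq> D"
proof
  fix x assume "x \<in> proper_prefixes y"
  then obtain k where "k < length y" "x = take k (butlast y)"
    by (auto simp: proper_prefixes_def butlast_conv_take)
  with assms show "x \<in> D" by (auto simp: prefix_closed_def exit_labels_def)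
qed

lemma spine_exit_unique:
  assumes D: "prefix_closed D"
    and y1: "y1 \<in> exit_labels D" "spine S (length y1) = y1"
    and y2: "y2 \<in> exit_labels D" "spine S (length y2) = y2"
  shows "y1 = y2"
proof -
  have not_shorter: False
    if "y \<in> exit_labels D" "spine S (length y) = y" "y' \<in> exit_labels D" "spine S (length y') = y'"
       "length y < length y'" for y y'
  proof -
    have "y = take (length y) y'" using that take_spine[of "length y" "length y'" S] by simp
    then have "y \<in> proper_prefixes y'" using that(5) by (auto simp: proper_prefixes_def)
    then show False using proper_prefixes_subset_exit[OF D that(3)] that(1) by (auto simp: exit_labels_def)
  qed
  show ?thesis
    using not_shorter[OF y1 y2] not_shorter[OF y2 y1] y1(2) y2(2) by (metis linorder_neqE_nat)
qed

lemma spine_exit_exists: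
  assumes "finite D" "[] \<in> D"
  shows "\<exists>y\<in>exit_labels D. spine S (length y) = y"
proof -
  define m where "m = Suc (Max (length ` D))"
  have "spine S m \<notin> D"
  proof
    assume "spine S m \<in> D"
    then have "m \<le> Max (length ` D)"
      using assms(1) Max_ge[of "length ` D" m] by (metis finite_imageI image_eqI length_spine)
    then show False by (simp add: m_def)
  qed
  then obtain k where k: "k \<le> m" "\<forall>i<k. spine S i \<in> D" "spine S k \<notin> D"
    using ex_least_nat_le[of "\<lambda>k. spine S k \<notin> D" m] assms(2) by (auto simp: spine_def)
  then have "k \<noteq> 0" using assms(2) by (cases k) (auto simp: spine_def)
  then have "butlast (spine S k) = spine S (k - 1)"
    using take_spine[of "k - 1" k S] by (simp add: butlast_conv_take)
  with k \<open>k \<noteq> 0\<close> have "spine S k \<in> exit_labels D"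
    by (auto simp: exit_labels_def spine_def)
  then show ?thesis by (intro bexI[of _ "spine S k"]) simp_all
qed

lemma on_spine_iff_proper_prefix:
  assumes D: "prefix_closed D" and y: "y \<in> exit_labels D" "spine S (length y) = y" and x: "x \<in> D"
  shows "x = spine S (length x) \<longleftrightarrow> x \<in> proper_prefixes y"
proof (cases "length x < length y")
  case True
  then have "spine S (length x) = take (length x) y"
    using y(2) take_spine[of "length x" "length y" S] by simp
  with True show ?thesis by (auto simp: proper_prefixes_def)
next
  case False
  have "x \<noteq> spine S (length x)"
  proof
    assume "x = spine S (length x)"
    then have "take (length y) x = y"
      using False y(2) take_spine[of "length y" "length x" S] by simp
    then have "y \<in> D" using D x by (metis prefix_closed_def)
    then show False using y(1) by (simp add: exit_labels_def)
  qed
  with False show ?thesis by (auto simp: proper_prefixes_def)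
qed

definition spine_along :: "(label \<Rightarrow> life) \<Rightarrow> label \<Rightarrow> (nat \<Rightarrow> life \<times> nat) set" where
  "spine_along \<omega> y = {S. \<forall>k<length y. S k = (\<omega> (take k y), y ! k)}"

lemma sb_lives_agree_iff:
  assumes D: "prefix_closed D" and y: "y \<in> exit_labels D" "spine S (length y) = y"
  shows "(\<forall>x\<in>D. sb_lives S \<omega>' x = \<omega>0 x)
     \<longleftrightarrow> S \<in> spine_along \<omega>0 y \<and> (\<forall>x\<in>D - proper_prefixes y. \<omega>' x = \<omega>0 x)"
proof -
  have on_spine: "sb_lives S \<omega>' x = (if x \<in> proper_prefixes y then fst (S (length x)) else \<omega>' x)"
    if "x \<in> D" for x
    using on_spine_iff_proper_prefix[OF D y that] by (simp add: sb_lives_def)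
  have "S \<in> spine_along \<omega>0 y \<longleftrightarrow> (\<forall>k<length y. fst (S k) = \<omega>0 (take k y))"
    using y(2) by (auto simp: spine_along_def spine_eq_iff prod_eq_iff)
  also have "\<dots> \<longleftrightarrow> (\<forall>x\<in>proper_prefixes y. fst (S (length x)) = \<omega>0 x)"
    by (auto simp: proper_prefixes_def)
  finally show ?thesis
    using proper_prefixes_subset_exit[OF D y(1)] on_spine by auto
qed

lemma spine_along_imp_spine: "S \<in> spine_along \<omega> y \<Longrightarrow> spine S (length y) = y"
  by (simp add: spine_along_def spine_eq_iff)

lemma sb_agree_eq_UN_spine_along:
  assumes "finite D" "prefix_closed D" "[] \<in> D"
  shows "{(S, \<omega>'). \<forall>x\<in>D. sb_lives S \<omega>' x = \<omega>0 x}
       = (\<Union>y\<in>exit_labels D. spine_along \<omega>0 y \<times> {\<omega>'. \<forall>x\<in>D - proper_prefixes y. \<omega>' x = \<omega>0 x})"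
proof (intro equalityI subsetI)
  fix z assume "z \<in> {(S, \<omega>'). \<forall>x\<in>D. sb_lives S \<omega>' x = \<omega>0 x}"
  then obtain S \<omega>' where z: "z = (S, \<omega>')" and agree: "\<forall>x\<in>D. sb_lives S \<omega>' x = \<omega>0 x"
    by blast
  obtain y where y: "y \<in> exit_labels D" "spine S (length y) = y"
    using spine_exit_exists[OF assms(1,3)] by blast
  with agree sb_lives_agree_iff[OF assms(2) y] z
  show "z \<in> (\<Union>y\<in>exit_labels D. spine_along \<omega>0 y \<times> {\<omega>'. \<forall>x\<in>D - proper_prefixes y. \<omega>' x = \<omega>0 x})"
    by blast
next
  fix z assume "z \<in> (\<Union>y\<in>exit_labels D. spine_along \<omega>0 y \<times> {\<omega>'. \<forall>x\<in>D - proper_prefixes y. \<omega>' x = \<omega>0 x})"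
  then obtain y S \<omega>' where z: "z = (S, \<omega>')" and y: "y \<in> exit_labels D"
    and S: "S \<in> spine_along \<omega>0 y" and \<omega>': "\<forall>x\<in>D - proper_prefixes y. \<omega>' x = \<omega>0 x"
    by blast
  with sb_lives_agree_iff[OF assms(2) y spine_along_imp_spine[OF S]]
  show "z \<in> {(S, \<omega>'). \<forall>x\<in>D. sb_lives S \<omega>' x = \<omega>0 x}"
    by simp
qed

lemma disjoint_spine_along:
  assumes "prefix_closed D"
  shows "disjoint_family_on (\<lambda>y. spine_along \<omega>0 y \<times> B y) (exit_labels D)"
  unfolding disjoint_family_on_def
proof (intro ballI impI)
  fix y1 y2 assume "y1 \<in> exit_labels D" "y2 \<in> exit_labels D" "y1 \<noteq> y2"
  then have "spine_along \<omega>0 y1 \<inter> spine_along \<omega>0 y2 = {}"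
    using spine_exit_unique[OF assms] spine_along_imp_spine by blast
  then show "spine_along \<omega>0 y1 \<times> B y1 \<inter> spine_along \<omega>0 y2 \<times> B y2 = {}"
    by blast
qed

lemma cylinder_eq_prod_emb:
  assumes "\<And>i. space (M i) = UNIV"
  shows "{\<omega>. \<forall>j\<in>J. \<omega> j \<in> A j} = prod_emb UNIV M J (Pi\<^sub>E J A)"
  using assms by (auto simp: prod_emb_def PiE_iff)

lemma sets_PiM_cylinder:
  assumes "\<And>i. space (M i) = UNIV" "finite J" "\<And>j. j \<in> J \<Longrightarrow> A j \<in> sets (M j)"
  shows "{\<omega>. \<forall>j\<in>J. \<omega> j \<in> A j} \<in> sets (PiM UNIV M)"
  using cylinder_eq_prod_emb[of M J A] assms sets_PiM_I[of J UNIV A M] by simp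

lemma emeasure_PiM_cylinder:
  assumes "\<And>i. prob_space (M i)" "\<And>i. space (M i) = UNIV"
    and "finite J" "\<And>j. j \<in> J \<Longrightarrow> A j \<in> sets (M j)"
  shows "emeasure (PiM UNIV M) {\<omega>. \<forall>j\<in>J. \<omega> j \<in> A j} = (\<Prod>j\<in>J. emeasure (M j) (A j))"
  using cylinder_eq_prod_emb[of M J A] assms emeasure_PiM_emb[of UNIV M J A] by simp

lemma space_PiM_UNIV: "(\<And>i. space (M i) = UNIV) \<Longrightarrow> space (PiM UNIV M) = UNIV"
  by (simp add: space_PiM PiE_def)

lemma space_cmj_law [simp]: "space (cmj_law p) = UNIV"
  by (simp add: cmj_law_def space_PiM_UNIV)

lemma prob_space_cmj_law: "prob_space (cmj_law p)"
  unfolding cmj_law_def by (intro prob_space_PiM prob_space_measure_pmf)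

lemma
  assumes "finite J"
  shows sets_cmj_law_agree: "{\<omega>. \<forall>x\<in>J. \<omega> x = \<omega>0 x} \<in> sets (cmj_law p)"
    and emeasure_cmj_law_agree:
      "emeasure (cmj_law p) {\<omega>. \<forall>x\<in>J. \<omega> x = \<omega>0 x} = ennreal (\<Prod>x\<in>J. pmf p (\<omega>0 x))"
proof -
  have eq: "{\<omega>. \<forall>x\<in>J. \<omega> x = \<omega>0 x} = {\<omega>. \<forall>x\<in>J. \<omega> x \<in> {\<omega>0 x}}" by simp
  show "{\<omega>. \<forall>x\<in>J. \<omega> x = \<omega>0 x} \<in> sets (cmj_law p)"
    unfolding eq cmj_law_def using assms by (intro sets_PiM_cylinder) auto
  show "emeasure (cmj_law p) {\<omega>. \<forall>x\<in>J. \<omega> x = \<omega>0 x} = ennreal (\<Prod>x\<in>J. pmf p (\<omega>0 x))"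
    unfolding eq cmj_law_def using assms
    by (subst emeasure_PiM_cylinder)
       (auto simp: prob_space_measure_pmf emeasure_pmf_single prod_ennreal)
qed

definition hat_weight :: "life pmf \<Rightarrow> real \<Rightarrow> life \<Rightarrow> nat \<Rightarrow> real" where
  "hat_weight p \<alpha> l j =
     (if 1 \<le> j \<and> j \<le> length l then exp (- \<alpha> * real (l ! (j - 1))) * pmf p l else 0)"

lemma hat_weight_nonneg: "0 \<le> hat_weight p \<alpha> l j"
  by (simp add: hat_weight_def)

lemma sets_hat_law [simp]: "sets (hat_law p \<alpha>) = UNIV"
  and space_hat_law [simp]: "space (hat_law p \<alpha>) = UNIV"
  by (simp_all add: hat_law_def)

lemma emeasure_hat_law:
  "emeasure (hat_law p \<alpha>) A
     = (\<integral>\<^sup>+ x. ennreal (hat_weight p \<alpha> (fst x) (snd x)) * indicator A x \<partial>count_space UNIV)"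
  unfolding hat_law_def
  by (subst emeasure_density) (auto simp: hat_weight_def case_prod_beta intro!: nn_integral_cong)

lemma emeasure_hat_law_singleton: "emeasure (hat_law p \<alpha>) {(l, j)} = ennreal (hat_weight p \<alpha> l j)"
  unfolding emeasure_hat_law by (subst nn_integral_indicator_singleton) auto

lemma emeasure_hat_law_null:
  assumes "pmf p l = 0"
  shows "emeasure (hat_law p \<alpha>) ({l} \<times> UNIV) = 0"
  unfolding emeasure_hat_law using assms
  by (subst nn_integral_0_iff_AE) (auto simp: hat_weight_def indicator_def)

lemma sum_exp_count_list:
  assumes "\<forall>a\<in>set l. 1 \<le> a"
  shows "(\<Sum>k. ennreal (exp (- \<alpha> * real (Suc k))) * ennreal (real (count_list l (Suc k))))
       = ennreal (\<Sum>a\<leftarrow>l. exp (- \<alpha> * real a))"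
  using assms
proof (induction l)
  case (Cons a l)
  let ?e = "\<lambda>k. ennreal (exp (- \<alpha> * real (Suc k)))"
  have split: "?e k * ennreal (real (count_list (a # l) (Suc k)))
      = (if k = a - 1 then ?e k else 0) + ?e k * ennreal (real (count_list l (Suc k)))" for k
    using Cons.prems by (auto simp: distrib_left ennreal_plus[symmetric])
  have single: "(\<Sum>k. if k = a - 1 then ?e k else 0) = ennreal (exp (- \<alpha> * real a))"
    using sums_unique[OF sums_single[of "a - 1" ?e]] Cons.prems by simp
  have "0 \<le> (\<Sum>a\<leftarrow>l. exp (- \<alpha> * real a))" by (rule sum_list_nonneg) auto
  then show ?case
    unfolding split using Cons single
    by (subst suminf_add[symmetric]) (auto simp: ennreal_plus)
qed simp

lemma nn_integral_hat_weight:
  "(\<integral>\<^sup>+ j. ennreal (hat_weight p \<alpha> l j) \<partial>count_space UNIV)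
     = ennreal (pmf p l * (\<Sum>a\<leftarrow>l. exp (- \<alpha> * real a)))"
proof -
  have "(\<integral>\<^sup>+ j. ennreal (hat_weight p \<alpha> l j) \<partial>count_space UNIV)
      = (\<integral>\<^sup>+ j. ennreal (exp (- \<alpha> * real (l ! (j - 1))) * pmf p l) * indicator {1..length l} j
           \<partial>count_space UNIV)"
    by (intro nn_integral_cong) (auto simp: hat_weight_def indicator_def)
  also have "\<dots> = ennreal (\<Sum>j\<in>{1..length l}. exp (- \<alpha> * real (l ! (j - 1))) * pmf p l)"
    by (subst nn_integral_indicator_finite) (auto intro: sum_ennreal)
  also have "(\<Sum>j\<in>{1..length l}. exp (- \<alpha> * real (l ! (j - 1))))
      = (\<Sum>i<length l. exp (- \<alpha> * real (l ! i)))"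
    by (rule sum.reindex_bij_witness[of _ Suc "\<lambda>j. j - 1"]) auto
  then have "(\<Sum>j\<in>{1..length l}. exp (- \<alpha> * real (l ! (j - 1))) * pmf p l)
      = pmf p l * (\<Sum>a\<leftarrow>l. exp (- \<alpha> * real a))"
    by (simp add: sum_distrib_left[symmetric] sum_list_sum_nth atLeast0LessThan mult.commute[of _ "pmf p l"])
  finally show ?thesis .
qed

lemma prob_space_hat_law:
  assumes pos: "\<And>l. l \<in> set_pmf p \<Longrightarrow> \<forall>a\<in>set l. 1 \<le> a"
    and malthus: "(\<Sum>k. ennreal (exp (- \<alpha> * real (Suc k))) * mean_births p (Suc k)) = 1"
  shows "prob_space (hat_law p \<alpha>)"
proof
  let ?w = "\<lambda>x. ennreal (hat_weight p \<alpha> (fst x) (snd x))"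
  have "emeasure (hat_law p \<alpha>) (space (hat_law p \<alpha>)) = (\<integral>\<^sup>+ x. ?w x \<partial>count_space UNIV)"
    by (simp add: emeasure_hat_law)
  also have "\<dots> = (\<integral>\<^sup>+ x. ?w x \<partial>(count_space UNIV \<Otimes>\<^sub>M count_space UNIV))"
    by (simp add: pair_measure_countable)
  also have "\<dots> = (\<integral>\<^sup>+ l. \<integral>\<^sup>+ j. ?w (l, j) \<partial>count_space UNIV \<partial>count_space UNIV)"
    by (rule sigma_finite_measure.nn_integral_fst[symmetric])
       (auto intro: sigma_finite_measure_count_space_countable simp: pair_measure_countable)
  also have "\<dots> = (\<integral>\<^sup>+ l. ennreal (\<Sum>a\<leftarrow>l. exp (- \<alpha> * real a)) \<partial>measure_pmf p)"
    by (simp add: nn_integral_hat_weight nn_integral_measure_pmf ennreal_mult' sum_list_nonneg mult.commute)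
  also have "\<dots> = (\<integral>\<^sup>+ l. (\<Sum>k. ennreal (exp (- \<alpha> * real (Suc k)))
                       * ennreal (real (count_list l (Suc k)))) \<partial>measure_pmf p)"
    by (intro nn_integral_cong_AE AE_pmfI, rule sum_exp_count_list[symmetric]) (use pos in auto)
  also have "\<dots> = (\<Sum>k. ennreal (exp (- \<alpha> * real (Suc k))) * mean_births p (Suc k))"
    by (subst nn_integral_suminf) (simp_all add: mean_births_def nn_integral_cmult)
  finally show "emeasure (hat_law p \<alpha>) (space (hat_law p \<alpha>)) = 1"
    using malthus by simp
qed

lemma emeasure_spine_along:
  assumes "prob_space (hat_law p \<alpha>)"
  shows "emeasure (PiM UNIV (\<lambda>_. hat_law p \<alpha>)) (spine_along \<omega> y)
       = ennreal (\<Prod>k<length y. hat_weight p \<alpha> (\<omega> (take k y)) (y ! k))"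
proof -
  have eq: "spine_along \<omega> y = {S. \<forall>k\<in>{..<length y}. S k \<in> {(\<omega> (take k y), y ! k)}}"
    by (auto simp: spine_along_def)
  have "emeasure (PiM UNIV (\<lambda>_. hat_law p \<alpha>)) {S. \<forall>k\<in>{..<length y}. S k \<in> {(\<omega> (take k y), y ! k)}}
      = (\<Prod>k<length y. emeasure (hat_law p \<alpha>) {(\<omega> (take k y), y ! k)})"
    using assms by (intro emeasure_PiM_cylinder) auto
  then show ?thesis
    unfolding eq by (simp add: emeasure_hat_law_singleton prod_ennreal hat_weight_nonneg)
qed

lemma sets_spine_along: "spine_along \<omega> y \<in> sets (PiM UNIV (\<lambda>_. hat_law p \<alpha>))"
proof -
  have "spine_along \<omega> y = {S. \<forall>k\<in>{..<length y}. S k \<in> {(\<omega> (take k y), y ! k)}}"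
    by (auto simp: spine_along_def)
  then show ?thesis by (simp only:) (rule sets_PiM_cylinder, auto)
qed

lemma prod_hat_weight_along:
  "(\<Prod>k<length y. hat_weight p \<alpha> (\<omega> (take k y)) (y ! k))
     = (if sigma \<omega> y = \<infinity> then 0
        else exp (- \<alpha> * real (the_enat (sigma \<omega> y))) * (\<Prod>x\<in>proper_prefixes y. pmf p (\<omega> x)))"
proof (induction y rule: rev_induct)
  case Nil
  then show ?case by (simp add: proper_prefixes_def zero_enat_def)
next
  case (snoc i y)
  have prod_snoc: "(\<Prod>k<length (y @ [i]). hat_weight p \<alpha> (\<omega> (take k (y @ [i]))) ((y @ [i]) ! k))
      = (\<Prod>k<length y. hat_weight p \<alpha> (\<omega> (take k y)) (y ! k)) * hat_weight p \<alpha> (\<omega> y) i"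
    by (simp add: lessThan_Suc nth_append)
  have prefixes_snoc: "(\<Prod>x\<in>proper_prefixes (y @ [i]). pmf p (\<omega> x))
      = pmf p (\<omega> y) * (\<Prod>x\<in>proper_prefixes y. pmf p (\<omega> x))"
    by (simp add: proper_prefixes_snoc finite_proper_prefixes not_in_proper_prefixes)
  show ?case
  proof (cases "sigma \<omega> y")
    case (enat s)
    show ?thesis
    proof (cases "1 \<le> i \<and> i \<le> length (\<omega> y)")
      case True
      then have "sigma \<omega> (y @ [i]) = enat (s + \<omega> y ! (i - 1))"
        using enat by (simp add: sigma_snoc tau_def)
      moreover have "exp (- \<alpha> * real (s + \<omega> y ! (i - 1)))
          = exp (- \<alpha> * real s) * exp (- \<alpha> * real (\<omega> y ! (i - 1)))"
        by (simp add: exp_add[symmetric] algebra_simps)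
      ultimately show ?thesis
        using enat True prod_snoc prefixes_snoc snoc.IH by (simp add: hat_weight_def mult_ac)
    next
      case False
      then have "hat_weight p \<alpha> (\<omega> y) i = 0" "sigma \<omega> (y @ [i]) = \<infinity>"
        by (auto simp: hat_weight_def sigma_snoc tau_def)
      then show ?thesis using prod_snoc by simp
    qed
  next
    case infinity
    then show ?thesis using prod_snoc snoc.IH by (simp add: sigma_snoc)
  qed
qed

lemma emeasure_sb_law_piece:
  assumes hat: "prob_space (hat_law p \<alpha>)" and "finite D" "proper_prefixes y \<subseteq> D"
  shows "emeasure (sb_law p \<alpha>) (spine_along \<omega>0 y \<times> {\<omega>'. \<forall>x\<in>D - proper_prefixes y. \<omega>' x = \<omega>0 x})
       = ennreal (if sigma \<omega>0 y = \<infinity> then 0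
                  else exp (- \<alpha> * real (the_enat (sigma \<omega>0 y))) * (\<Prod>x\<in>D. pmf p (\<omega>0 x)))"
proof -
  interpret cmj: prob_space "cmj_law p" by (rule prob_space_cmj_law)
  have split: "(\<Prod>x\<in>proper_prefixes y. pmf p (\<omega>0 x)) * (\<Prod>x\<in>D - proper_prefixes y. pmf p (\<omega>0 x))
      = (\<Prod>x\<in>D. pmf p (\<omega>0 x))"
    using assms(2,3) by (metis prod.subset_diff mult.commute)
  have "emeasure (sb_law p \<alpha>) (spine_along \<omega>0 y \<times> {\<omega>'. \<forall>x\<in>D - proper_prefixes y. \<omega>' x = \<omega>0 x})
      = ennreal (\<Prod>k<length y. hat_weight p \<alpha> (\<omega>0 (take k y)) (y ! k))
        * ennreal (\<Prod>x\<in>D - proper_prefixes y. pmf p (\<omega>0 x))"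
    unfolding sb_law_def using assms(2)
    by (simp add: cmj.emeasure_pair_measure_Times sets_spine_along sets_cmj_law_agree
        emeasure_spine_along[OF hat] emeasure_cmj_law_agree)
  also have "\<dots> = ennreal (if sigma \<omega>0 y = \<infinity> then 0
                  else exp (- \<alpha> * real (the_enat (sigma \<omega>0 y))) * (\<Prod>x\<in>D. pmf p (\<omega>0 x)))"
    by (simp add: prod_hat_weight_along ennreal_mult'[symmetric] prod_nonneg split[symmetric] mult.assoc)
  finally show ?thesis .
qed

lemma nerman_nonneg: "0 \<le> nerman \<alpha> \<omega> n"
  by (simp add: nerman_def sum_nonneg)

lemma emeasure_sb_law_stopped:
  assumes hat: "prob_space (hat_law p \<alpha>)" and fin: "finite (born \<omega>0 n)"
  shows "emeasure (sb_law p \<alpha>) {(S, \<omega>'). stopped (sb_lives S \<omega>') n = stopped \<omega>0 n}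
       = ennreal (nerman \<alpha> \<omega>0 n * (\<Prod>x\<in>born \<omega>0 n. pmf p (\<omega>0 x)))"
proof -
  define D where "D = born \<omega>0 n"
  define Q where "Q = (\<Prod>x\<in>D. pmf p (\<omega>0 x))"
  define B where "B y = {\<omega>'. \<forall>x\<in>D - proper_prefixes y. \<omega>' x = \<omega>0 x}" for y
  define e where "e y = exp (- \<alpha> * real (the_enat (sigma \<omega>0 y)))" for y
  have D: "finite D" "prefix_closed D" "[] \<in> D"
    using fin prefix_closed_born Nil_in_born by (auto simp: D_def)
  have pieces: "emeasure (sb_law p \<alpha>) (spine_along \<omega>0 y \<times> B y)
      = ennreal (if y \<in> coming_gen \<omega>0 n then e y * Q else 0)" if "y \<in> exit_labels D" for y
    using emeasure_sb_law_piece[OF hat D(1) proper_prefixes_subset_exit[OF D(2) that]] that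
    by (simp add: B_def Q_def e_def D_def coming_gen_eq)
  have "{(S, \<omega>'). stopped (sb_lives S \<omega>') n = stopped \<omega>0 n} = (\<Union>y\<in>exit_labels D. spine_along \<omega>0 y \<times> B y)"
    unfolding stopped_eq_iff using sb_agree_eq_UN_spine_along[OF D] by (simp add: D_def B_def)
  then have "emeasure (sb_law p \<alpha>) {(S, \<omega>'). stopped (sb_lives S \<omega>') n = stopped \<omega>0 n}
      = (\<integral>\<^sup>+ y. emeasure (sb_law p \<alpha>) (spine_along \<omega>0 y \<times> B y) \<partial>count_space (exit_labels D))"
    using disjoint_spine_along[OF D(2)] D(1) unfolding sb_law_def
    by (simp only:) (rule emeasure_UN_countable,
        auto intro!: pair_measureI sets_spine_along sets_cmj_law_agree simp: B_def)
  also have "\<dots> = (\<integral>\<^sup>+ y. ennreal (e y * Q) * indicator (coming_gen \<omega>0 n) y \<partial>count_space (exit_labels D))"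
    by (intro nn_integral_cong) (simp add: pieces)
  also have "\<dots> = (\<Sum>y\<in>coming_gen \<omega>0 n. ennreal (e y * Q))"
    using finite_coming_gen[OF fin]
    by (subst nn_integral_indicator_finite) (auto simp: coming_gen_eq D_def)
  also have "\<dots> = ennreal (nerman \<alpha> \<omega>0 n * Q)"
    unfolding nerman_def e_def Q_def
    by (subst sum_ennreal) (auto intro!: mult_nonneg_nonneg prod_nonneg simp: sum_distrib_right)
  finally show ?thesis by (simp add: Q_def D_def)
qed

lemma nn_integral_nerman_stopped:
  assumes fin: "finite (born \<omega>0 n)"
  shows "(\<integral>\<^sup>+ \<omega>. ennreal (nerman \<alpha> \<omega> n) * indicator {\<omega>. stopped \<omega> n = stopped \<omega>0 n} \<omega> \<partial>cmj_law p)
       = ennreal (nerman \<alpha> \<omega>0 n * (\<Prod>x\<in>born \<omega>0 n. pmf p (\<omega>0 x)))"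
proof -
  let ?E = "{\<omega>. \<forall>x\<in>born \<omega>0 n. \<omega> x = \<omega>0 x}"
  have "(\<integral>\<^sup>+ \<omega>. ennreal (nerman \<alpha> \<omega> n) * indicator {\<omega>. stopped \<omega> n = stopped \<omega>0 n} \<omega> \<partial>cmj_law p)
      = (\<integral>\<^sup>+ \<omega>. ennreal (nerman \<alpha> \<omega>0 n) * indicator ?E \<omega> \<partial>cmj_law p)"
    by (intro nn_integral_cong) (auto simp: stopped_eq_iff indicator_def nerman_eq_if_agree)
  also have "\<dots> = ennreal (nerman \<alpha> \<omega>0 n) * emeasure (cmj_law p) ?E"
    using fin by (simp add: nn_integral_cmult_indicator sets_cmj_law_agree)
  finally show ?thesis
    using fin by (simp add: emeasure_cmj_law_agree ennreal_mult' nerman_nonneg)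
qed

text \<open>This case is separate because the born set may then be infinite.\<close>

lemma
  assumes hat: "prob_space (hat_law p \<alpha>)" and x0: "x0 \<in> born \<omega>0 n" "pmf p (\<omega>0 x0) = 0"
  shows emeasure_sb_law_stopped_null:
      "emeasure (sb_law p \<alpha>) {(S, \<omega>'). stopped (sb_lives S \<omega>') n = stopped \<omega>0 n} = 0"
    and nn_integral_nerman_stopped_null:
      "(\<integral>\<^sup>+ \<omega>. ennreal (nerman \<alpha> \<omega> n) * indicator {\<omega>. stopped \<omega> n = stopped \<omega>0 n} \<omega> \<partial>cmj_law p) = 0"
proof -
  interpret cmj: prob_space "cmj_law p" by (rule prob_space_cmj_law)
  define N1 where "N1 = {S. \<forall>k\<in>{length x0}. S k \<in> {\<omega>0 x0} \<times> (UNIV :: nat set)}"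
  define N2 where "N2 = {\<omega>. \<omega> x0 = \<omega>0 x0}"
  have N1: "N1 \<in> sets (PiM UNIV (\<lambda>_. hat_law p \<alpha>))"
    unfolding N1_def by (rule sets_PiM_cylinder) auto
  have "emeasure (PiM UNIV (\<lambda>_. hat_law p \<alpha>)) N1 = 0"
    unfolding N1_def using hat emeasure_hat_law_null[OF x0(2)]
    by (subst emeasure_PiM_cylinder) auto
  note N1 = N1 this
  have N2: "N2 \<in> sets (cmj_law p)" "emeasure (cmj_law p) N2 = 0"
    unfolding N2_def using sets_cmj_law_agree[where J = "{x0}"] emeasure_cmj_law_agree[where J = "{x0}"] x0(2)
    by simp_all
  have "{(S, \<omega>'). stopped (sb_lives S \<omega>') n = stopped \<omega>0 n} \<subseteq> N1 \<times> UNIV \<union> UNIV \<times> N2"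
  proof
    fix z assume "z \<in> {(S, \<omega>'). stopped (sb_lives S \<omega>') n = stopped \<omega>0 n}"
    then obtain S \<omega>' where z: "z = (S, \<omega>')" and "stopped (sb_lives S \<omega>') n = stopped \<omega>0 n"
      by blast
    then have "sb_lives S \<omega>' x0 = \<omega>0 x0" using x0(1) stopped_eq_iff by blast
    with z show "z \<in> N1 \<times> UNIV \<union> UNIV \<times> N2"
      by (cases "x0 = spine S (length x0)") (auto simp: sb_lives_def N1_def N2_def mem_Times_iff)
  qed
  moreover have "N1 \<times> UNIV \<union> UNIV \<times> N2 \<in> null_sets (sb_law p \<alpha>)"
  proof -
    let ?H = "PiM (UNIV :: nat set) (\<lambda>_. hat_law p \<alpha>)"
    have top: "UNIV \<in> sets ?H" "UNIV \<in> sets (cmj_law p)"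
      using sets.top[of ?H] sets.top[of "cmj_law p"] by (simp_all add: space_PiM_UNIV)
    have "emeasure (?H \<Otimes>\<^sub>M cmj_law p) (N1 \<times> UNIV) = emeasure ?H N1 * emeasure (cmj_law p) UNIV"
      using N1(1) top(2) by (rule cmj.emeasure_pair_measure_Times)
    moreover have "emeasure (?H \<Otimes>\<^sub>M cmj_law p) (UNIV \<times> N2) = emeasure ?H UNIV * emeasure (cmj_law p) N2"
      using top(1) N2(1) by (rule cmj.emeasure_pair_measure_Times)
    ultimately show ?thesis
      unfolding sb_law_def using N1 N2 top
      by (intro null_sets.Un) (auto simp: null_sets_def intro: pair_measureI)
  qed
  ultimately show "emeasure (sb_law p \<alpha>) {(S, \<omega>'). stopped (sb_lives S \<omega>') n = stopped \<omega>0 n} = 0"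
    by (metis null_setsD1 null_setsD2 emeasure_eq_0)
  have "AE \<omega> in cmj_law p. \<omega> \<notin> N2"
    using N2 by (intro AE_I'[of N2]) auto
  then have "AE \<omega> in cmj_law p. stopped \<omega> n \<noteq> stopped \<omega>0 n"
    by eventually_elim (use x0(1) in \<open>auto simp: stopped_eq_iff N2_def\<close>)
  then show "(\<integral>\<^sup>+ \<omega>. ennreal (nerman \<alpha> \<omega> n) * indicator {\<omega>. stopped \<omega> n = stopped \<omega>0 n} \<omega> \<partial>cmj_law p) = 0"
    by (subst nn_integral_cong_AE[where v = "\<lambda>_. 0"]) (auto elim!: eventually_mono)
qed

theorem lemma5p1:
  fixes p :: "life pmf" and \<alpha> :: real and n :: nat and t :: "label \<Rightarrow> life option"
  assumes lives: "\<And>l. l \<in> set_pmf p \<Longrightarrow> sorted l \<and> (\<forall>a\<in>set l. 1 \<le> a)"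
    and malthus: "(\<Sum>k. ennreal (exp (- \<alpha> * real (Suc k))) * mean_births p (Suc k)) = 1"
  shows "emeasure (sb_law p \<alpha>) {(S, \<omega>'). stopped (sb_lives S \<omega>') n = t}
       = (\<integral>\<^sup>+ \<omega>. ennreal (nerman \<alpha> \<omega> n) * indicator {\<omega>. stopped \<omega> n = t} \<omega> \<partial>cmj_law p)"
proof (cases "t \<in> range (\<lambda>\<omega>. stopped \<omega> n)")
  case True
  then obtain \<omega>0 where t: "t = stopped \<omega>0 n" by blast
  have hat: "prob_space (hat_law p \<alpha>)"
    using lives malthus by (intro prob_space_hat_law) auto
  show ?thesis
  proof (cases "\<forall>x\<in>born \<omega>0 n. \<omega>0 x \<in> set_pmf p")
    case True
    then have "finite (born \<omega>0 n)" using lives by (intro finite_born) auto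
    then show ?thesis
      unfolding t by (simp add: emeasure_sb_law_stopped[OF hat] nn_integral_nerman_stopped)
  next
    case False
    then obtain x0 where "x0 \<in> born \<omega>0 n" "pmf p (\<omega>0 x0) = 0" by (auto simp: set_pmf_iff)
    then show ?thesis
      unfolding t by (simp add: emeasure_sb_law_stopped_null[OF hat] nn_integral_nerman_stopped_null[OF hat])
  qed
next
  case False
  then have "{(S, \<omega>'). stopped (sb_lives S \<omega>') n = t} = {}" "{\<omega>. stopped \<omega> n = t} = {}" by auto
  then show ?thesis by simp
qed

end
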